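(* Let $\phi=\tilde p/p$ be a degree $(n,1)$ rational inner function as in the context, and let $Q,R_1,\dots,R_n\in\mathbb{C}[z_1,z_2]$ be polynomials with $\deg Q\le(n,0)$, $\deg R_j\le(n-1,1)$ such that for all $z,w\in\mathbb{C}^2$ $$p(z)\overline{p(w)}-\tilde p(z)\overline{\tilde p(w)}=(1-z_1\bar w_1)\sum_{j=1}^nR_j(z)\overline{R_j(w)}+(1-z_2\bar w_2)Q(z)\overline{Q(w)}.$$ Then: (i) $|Q(\zeta_1)|^2=|p_1(\zeta_1)|^2-|p_2(\zeta_1)|^2$ for all $\zeta_1\in\mathbb{T}$; (ii) for every $\alpha\in\mathbb{T}$ and each $j$, there are a unique polynomial $r_j$ in one variable with $\deg r_j\le n-1$ and a rational function $b_j$ in the disk algebra $A(\mathbb{D})$ (in fact $b_j\in H^2(\mathbb{D})\ominus B_\alpha H^2(\mathbb{D})$) such that $R_j(z)=r_j(z_1)\bigl(1-B_\alpha(z_1)z_2\bigr)+z_2Q(z_1)b_j(z_1)$ for all $z\in\overline{\mathbb{D}}^2$.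
   Context: $\mathbb{D}$ is the open unit disk, $\mathbb{T}$ the unit circle; $\deg$ of a two-variable polynomial is the pair of its degrees in $z_1$ and $z_2$, and $Q$ with $\deg Q\le(n,0)$ is regarded as a one-variable polynomial $Q(z_1)$. Fix $n\ge1$. Let $p\in\mathbb{C}[z_1,z_2]$ have no zeros on $\mathbb{D}^2$, degree at most $n$ in $z_1$ and at most $1$ in $z_2$; write $p(z)=p_1(z_1)+z_2p_2(z_1)$. Set $\tilde p(z)=z_1^nz_2\overline{p(1/\bar z_1,1/\bar z_2)}=z_2\tilde p_1(z_1)+\tilde p_2(z_1)$ with $\tilde p_i(z)=z^n\overline{p_i(1/\bar z)}$. Assume $\tilde p$ has degree exactly $(n,1)$ and $p,\tilde p$ have no common factor, so $\phi=\tilde p/p$ is a degree $(n,1)$ rational inner function. $B_\alpha$ is the rational function $\frac{\tilde p_1(z)-\alpha p_2(z)}{\alpha p_1(z)-\tilde p_2(z)}$ with common factors cancelled (a finite Blaschke product). *)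

theory Defs
  imports "HOL-Analysis.Analysis" "HOL-Computational_Algebra.Computational_Algebra" "HOL-Computational_Algebra.Field_as_Ring"
begin

text \<open>Two-variable polynomials are represented as elements of complex poly poly:
  a polynomial in z2 whose coefficients are polynomials in z1.
  Thus degree P is the degree in z2 and the degree in z1 is the maximum of
  the degrees of the coefficients.\<close>

definition eval2 :: "complex poly poly \<Rightarrow> complex \<Rightarrow> complex \<Rightarrow> complex" where
  "eval2 P z1 z2 = poly (map_poly (\<lambda>c. poly c z1) P) z2"

definition degz1 :: "complex poly poly \<Rightarrow> nat" where
  "degz1 P = Max ((\<lambda>i. degree (coeff P i)) ` {..degree P})"

text \<open>One-variable reflection: refl1 n q (z) = z^n * conj (q (1 / conj z)).\<close>
definition refl1 :: "nat \<Rightarrow> complex poly \<Rightarrow> complex poly" where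
  "refl1 n q = (\<Sum>i\<le>n. monom (cnj (coeff q (n - i))) i)"

text \<open>Reflection of p = p1 + z2 p2 w.r.t. degree (n,1):
  ptilde = z2 * refl1 n p1 + refl1 n p2, i.e. z1^n z2 conj(p(1/conj z1, 1/conj z2)).\<close>
definition ptilde :: "nat \<Rightarrow> complex poly poly \<Rightarrow> complex poly poly" where
  "ptilde n P = [: refl1 n (coeff P 1), refl1 n (coeff P 0) :]"

definition Balpha :: "nat \<Rightarrow> complex poly poly \<Rightarrow> complex \<Rightarrow> complex \<Rightarrow> complex" where
  "Balpha n P \<alpha> z =
     (let num = refl1 n (coeff P 0) - smult \<alpha> (coeff P 1);
          den = smult \<alpha> (coeff P 0) - refl1 n (coeff P 1);
          g = gcd num den
      in poly (num div g) z / poly (den div g) z)"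

definition rational_disk_algebra :: "(complex \<Rightarrow> complex) \<Rightarrow> bool" where
  "rational_disk_algebra b \<longleftrightarrow>
     (\<exists>u v. v \<noteq> 0 \<and> (\<forall>z\<in>cball 0 1. poly v z \<noteq> 0 \<longrightarrow> b z = poly u z / poly v z))
     \<and> continuous_on (cball 0 1) b \<and> b holomorphic_on ball 0 1"

text \<open>For b in A(D) (hence in H^2): b is orthogonal to B H^2 in H^2, i.e. orthogonal
  (boundary inner product) to B z^k for all k, since the B z^k span a dense subspace
  of B H^2.\<close>
definition orth_BH2 :: "(complex \<Rightarrow> complex) \<Rightarrow> (complex \<Rightarrow> complex) \<Rightarrow> bool" where
  "orth_BH2 B b \<longleftrightarrow>
     (\<forall>k::nat. integral {0..2*pi} (\<lambda>t. b (cis t) * cnj (B (cis t) * cis t ^ k)) = 0)"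

end

theory Submission
  imports Defs "HOL-Complex_Analysis.Complex_Analysis"
begin

(* Write p = p1 + z2 p2, ptilde = pt2 + z2 pt1 and R_j = r_j + z2 s_j. Comparing the coefficients
   of z2 and conj w2 in the Agler identity gives four one-variable kernel identities; on the
   diagonal of the unit circle the first one is part (i).
   For part (ii), pair these identities with (num, den) = (pt1 - alpha p2, alpha p1 - pt2): since
   |alpha| = 1 the p-terms cancel, and after removing gcd num den the polynomials
   h_j = num r_j + den s_j satisfy
     (1 - z conj w) sum_j h_j(z) conj h_j(w) = Q(z) conj Q(w) (den(z) conj den(w) - num(z) conj num(w)).
   A Gram-matrix argument shows that Q divides every h_j. Writing h_j = Q q_j, the resulting kernel
   identity for the q_j shows that den has no zeros on the closed disk, that B = num / den is inner,
   and that b_j = q_j / den satisfies sum_j b_j(z) conj b_j(w) = (1 - B(z) conj B(w)) / (1 - z conj w),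
   the reproducing kernel of H^2 minus B H^2; the Gram-matrix argument once more yields b_j
   orthogonal to B H^2. Dividing Q q_j = num r_j + den s_j by den gives the representation of R_j,
   and r_j = R_j(., 0) is forced. *)

lemma poly_eqI_on_infinite:
  fixes p q :: "'a::idom poly"
  assumes "infinite S" "\<And>z. z \<in> S \<Longrightarrow> poly p z = poly q z"
  shows "p = q"
proof (rule ccontr)
  assume "p \<noteq> q"
  hence "finite {z. poly (p - q) z = 0}" by (intro poly_roots_finite) simp
  moreover have "S \<subseteq> {z. poly (p - q) z = 0}" using assms(2) by auto
  ultimately show False using assms(1) finite_subset by blast
qed

lemma infinite_unit_sphere: "infinite (sphere (0::complex) 1)"
proof
  assume "finite (sphere (0::complex) 1)"
  moreover have "uncountable (sphere (0::complex) 1)"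
    by (rule connected_uncountable[of _ 1 "-1"]) (auto intro: connected_sphere)
  ultimately show False using countable_finite by blast
qed

lemma sum_cnj_mult_self_eq_0D:
  fixes c :: "'i \<Rightarrow> complex"
  assumes "finite J" "(\<Sum>j\<in>J. cnj (c j) * c j) = 0" "j \<in> J"
  shows "c j = 0"
proof -
  have "cnj (c j) * c j = of_real ((cmod (c j))\<^sup>2)" for j
    by (metis complex_norm_square mult.commute)
  hence "complex_of_real (\<Sum>j\<in>J. (cmod (c j))\<^sup>2) = 0"
    using assms(2) by (simp add: of_real_sum)
  hence "(\<Sum>j\<in>J. (cmod (c j))\<^sup>2) = 0" by (simp only: of_real_eq_0_iff)
  thus ?thesis using sum_nonneg_eq_0_iff[OF assms(1), of "\<lambda>j. (cmod (c j))\<^sup>2"] assms(3) by simp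
qed

lemma mod_sum_smult:
  fixes Q :: "'a::field poly"
  shows "(\<Sum>j\<in>J. smult (a j) (h j)) mod Q = (\<Sum>j\<in>J. smult (a j) (h j mod Q))"
  by (induction J rule: infinite_finite_induct) (simp_all add: poly_mod_add_left mod_smult_left)

lemma coprime_imp_no_common_root:
  fixes a b :: "'a::field poly"
  assumes "coprime a b" "poly a x = 0" "poly b x = 0"
  shows False
proof -
  have "[:-x, 1:] dvd a" "[:-x, 1:] dvd b" using assms(2,3) poly_eq_0_iff_dvd by blast+
  hence "is_unit [:-x, 1:]" using assms(1) coprime_common_divisor by blast
  thus False by (auto simp: is_unit_poly_iff)
qed

lemma refl1_0 [simp]: "refl1 n 0 = 0"
  by (simp add: refl1_def)

lemma eval2_at_0: "eval2 P z1 0 = poly (coeff P 0) z1"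
  by (simp add: eval2_def poly_0_coeff_0 coeff_map_poly)

lemma eval2_degree_le_1:
  assumes "degree P \<le> 1"
  shows "eval2 P z1 z2 = poly (coeff P 0) z1 + z2 * poly (coeff P 1) z1"
proof -
  have "P = [:coeff P 0, coeff P 1:]"
    using assms by (intro poly_eqI) (auto simp: coeff_pCons coeff_eq_0 split: nat.split)
  hence "eval2 P z1 z2 = eval2 [:coeff P 0, coeff P 1:] z1 z2" by simp
  thus ?thesis by (simp add: eval2_def map_poly_pCons)
qed

lemma poly_refl1_unimodular:
  assumes "degree q \<le> n" "cmod z = 1"
  shows "poly (refl1 n q) z = z ^ n * cnj (poly q z)"
proof -
  have zc: "z * cnj z = 1" using assms(2) complex_norm_square[of z] by simp
  have "poly q z = (\<Sum>i\<le>n. coeff q i * z ^ i)"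
    by (subst poly_as_sum_of_monoms'[OF assms(1), symmetric]) (simp add: poly_sum poly_monom)
  hence "z ^ n * cnj (poly q z) = (\<Sum>i\<le>n. cnj (coeff q i) * (z ^ n * cnj z ^ i))"
    by (simp add: sum_distrib_left algebra_simps)
  also have "\<dots> = (\<Sum>i\<le>n. cnj (coeff q i) * z ^ (n - i))"
  proof (rule sum.cong)
    fix i assume "i \<in> {..n}"
    hence "z ^ n * cnj z ^ i = z ^ (n - i) * (z * cnj z) ^ i"
      by (simp add: power_mult_distrib power_add[symmetric])
    thus "cnj (coeff q i) * (z ^ n * cnj z ^ i) = cnj (coeff q i) * z ^ (n - i)" using zc by simp
  qed simp
  also have "\<dots> = (\<Sum>i\<le>n. cnj (coeff q (n - i)) * z ^ i)"
    by (rule sum.reindex_bij_witness[of _ "\<lambda>i. n - i" "\<lambda>i. n - i"]) auto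
  finally show ?thesis by (simp add: refl1_def poly_sum poly_monom)
qed

lemma sesquipolynomial_eq_0_if_kernel_multiple_eq_0:
  fixes f :: "complex poly" and X :: "complex \<Rightarrow> complex \<Rightarrow> complex"
  assumes f: "f \<noteq> 0"
    and poly_in_z: "\<And>w. \<exists>P. \<forall>z. X z w = poly P z"
    and cnj_poly_in_w: "\<And>z. \<exists>P. \<forall>w. X z w = cnj (poly P w)"
    and vanish: "\<And>z w. poly f z * cnj (poly f w) * X z w = 0"
  shows "X z w = 0"
proof -
  have cnj_f_X: "cnj (poly f w') * X z' w' = 0" for z' w'
  proof -
    obtain P where P: "\<forall>z. X z w' = poly P z" using poly_in_z by blast
    have "\<forall>z. poly (f * smult (cnj (poly f w')) P) z = 0"
    proof
      fix z
      have "poly (f * smult (cnj (poly f w')) P) z = poly f z * cnj (poly f w') * X z w'"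
        using P by simp
      also have "\<dots> = 0" by (rule vanish)
      finally show "poly (f * smult (cnj (poly f w')) P) z = 0" .
    qed
    hence "f * smult (cnj (poly f w')) P = 0" using poly_all_0_iff_0 by blast
    hence "smult (cnj (poly f w')) P = 0" using f by simp
    thus ?thesis using P by (metis poly_0 poly_smult)
  qed
  obtain P where P: "\<forall>w. X z w = cnj (poly P w)" using cnj_poly_in_w by blast
  have "\<forall>w. poly (f * P) w = 0"
    using cnj_f_X[of _ z] P by (metis complex_cnj_cnj complex_cnj_mult complex_cnj_zero poly_mult)
  hence "f * P = 0" using poly_all_0_iff_0 by blast
  hence "P = 0" using f by simp
  thus ?thesis using P by simp
qed

lemma kernel_identity_cancel:
  fixes f F A C :: "complex poly" and u :: "'i \<Rightarrow> complex poly"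
  assumes f: "f \<noteq> 0"
    and "\<And>z w. poly f z * cnj (poly f w) * ((1 - z * cnj w) * (\<Sum>j\<in>J. poly (u j) z * cnj (poly (u j) w)))
          = poly f z * cnj (poly f w) * (poly F z * cnj (poly F w) * (poly A z * cnj (poly A w) - poly C z * cnj (poly C w)))"
  shows "(1 - z * cnj w) * (\<Sum>j\<in>J. poly (u j) z * cnj (poly (u j) w))
          = poly F z * cnj (poly F w) * (poly A z * cnj (poly A w) - poly C z * cnj (poly C w))"
proof -
  let ?X = "\<lambda>z w. (1 - z * cnj w) * (\<Sum>j\<in>J. poly (u j) z * cnj (poly (u j) w))
          - poly F z * cnj (poly F w) * (poly A z * cnj (poly A w) - poly C z * cnj (poly C w))"
  have "?X z w = 0"
  proof (rule sesquipolynomial_eq_0_if_kernel_multiple_eq_0[OF f, of ?X])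
    fix w
    show "\<exists>P. \<forall>z. ?X z w = poly P z"
      by (rule exI[of _ "[:1, - cnj w:] * (\<Sum>j\<in>J. smult (cnj (poly (u j) w)) (u j))
          - smult (cnj (poly F w)) (F * (smult (cnj (poly A w)) A - smult (cnj (poly C w)) C))"])
         (simp add: poly_sum algebra_simps sum_distrib_left)
  next
    fix z
    show "\<exists>P. \<forall>w. ?X z w = cnj (poly P w)"
      by (rule exI[of _ "[:1, - cnj z:] * (\<Sum>j\<in>J. smult (cnj (poly (u j) z)) (u j))
          - smult (cnj (poly F z)) (F * (smult (cnj (poly A z)) A - smult (cnj (poly C z)) C))"])
         (simp add: poly_sum algebra_simps sum_distrib_left)
  qed (use assms(2) in \<open>simp add: right_diff_distrib\<close>)
  thus ?thesis by simp
qed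

text \<open>Gram-matrix argument: for the residues \<open>c\<^sub>j = h\<^sub>j mod Q\<close> the hypothesis forces
  \<open>\<Sum>\<^sub>j cnj (c\<^sub>j z) h\<^sub>j = 0\<close>, whose residue evaluated at \<open>z\<close> is \<open>\<Sum>\<^sub>j \<bar>c\<^sub>j z\<bar>\<^sup>2\<close>.\<close>
lemma dvd_if_dvd_conj_combinations:
  fixes Q :: "complex poly" and h :: "'i \<Rightarrow> complex poly"
  assumes J: "finite J" and W: "infinite W"
    and dvd: "\<And>w. w \<in> W \<Longrightarrow> Q dvd (\<Sum>j\<in>J. smult (cnj (poly (h j) w)) (h j))"
    and j: "j \<in> J"
  shows "Q dvd h j"
proof -
  define c where "c j = h j mod Q" for j
  have comb_mod: "(\<Sum>j\<in>J. smult (a j) (h j)) mod Q = (\<Sum>j\<in>J. smult (a j) (c j))" for a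
    unfolding c_def by (rule mod_sum_smult)
  have "poly (c j) z = 0" for z
  proof -
    have "(\<Sum>j\<in>J. smult (cnj (poly (c j) z)) (h j)) = 0"
    proof (rule poly_eqI_on_infinite[OF W])
      fix w assume "w \<in> W"
      hence "(\<Sum>j\<in>J. smult (cnj (poly (h j) w)) (c j)) = 0"
        using dvd comb_mod by (simp add: dvd_eq_mod_eq_0)
      hence "poly (\<Sum>j\<in>J. smult (cnj (poly (h j) w)) (c j)) z = 0" by simp
      hence "cnj (\<Sum>j\<in>J. cnj (poly (h j) w) * poly (c j) z) = 0" by (simp add: poly_sum)
      thus "poly (\<Sum>j\<in>J. smult (cnj (poly (c j) z)) (h j)) w = poly 0 w"
        by (simp add: poly_sum mult.commute)
    qed
    hence "(\<Sum>j\<in>J. smult (cnj (poly (c j) z)) (c j)) = 0"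
      using comb_mod by (metis mod_0)
    hence "poly (\<Sum>j\<in>J. smult (cnj (poly (c j) z)) (c j)) z = 0" by simp
    hence "(\<Sum>j\<in>J. cnj (poly (c j) z) * poly (c j) z) = 0" by (simp add: poly_sum)
    thus ?thesis by (rule sum_cnj_mult_self_eq_0D[OF J _ j])
  qed
  hence "c j = 0" using poly_all_0_iff_0 by blast
  thus ?thesis by (simp add: c_def dvd_eq_mod_eq_0)
qed

lemma eq_coeff_0_if_eval2_eq_on_disk:
  assumes "\<And>z. cmod z \<le> 1 \<Longrightarrow> eval2 P z 0 = poly r z"
  shows "r = coeff P 0"
proof (rule poly_eqI_on_infinite)
  show "infinite (cball (0::complex) 1)"
    using uncountable_cball[of 1 "0::complex"] countable_finite by auto
qed (use assms in \<open>simp add: eval2_at_0\<close>)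

lemma model_kernel_boundary_identity:
  fixes x y Bx By :: complex
  assumes "x * cnj x = 1" "Bx * cnj Bx = 1" "x \<noteq> y"
  shows "(1 - Bx * cnj By) / (1 - x * cnj y) * cnj (Bx * x ^ k)
    = \<i> * cnj ((Bx - By) * x ^ k / (x - y) * \<i> * x)"
proof -
  have inv_x: "inverse x = cnj x" using assms(1) by (rule inverse_unique)
  have "(1 - Bx * cnj By) / (1 - x * cnj y) * cnj (Bx * x ^ k)
      = ((1 - Bx * cnj By) * cnj Bx) * cnj x ^ k / (1 - x * cnj y)"
    by (simp only: complex_cnj_mult complex_cnj_power times_divide_eq_left mult.assoc)
  also have "\<dots> = (cnj Bx - cnj By) * cnj x ^ k / (x * (cnj x - cnj y))"
    using assms(1,2) by (simp add: algebra_simps)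
  also have "\<dots> = (cnj Bx - cnj By) * cnj x ^ k * cnj x / (cnj x - cnj y)"
    by (simp add: inv_x divide_inverse inverse_mult_distrib mult.assoc)
  also have "\<dots> = \<i> * cnj ((Bx - By) * x ^ k / (x - y) * \<i> * x)"
    by (simp add: field_simps)
  finally show ?thesis .
qed

text \<open>After conjugation, the pairing of the model space kernel with \<open>B z\<^sup>k\<close> becomes
  the Cauchy integral of \<open>(B u - B w) u\<^sup>k / (u - w)\<close> over the unit circle, which is
  \<open>2\<pi>i\<close> times the vanishing value \<open>(B w - B w) w\<^sup>k\<close>.\<close>
lemma orth_BH2_model_kernel:
  fixes B :: "complex \<Rightarrow> complex"
  assumes cont: "continuous_on (cball 0 1) B" and hol: "B holomorphic_on ball 0 1"
    and unimodular: "\<And>u. cmod u = 1 \<Longrightarrow> cmod (B u) = 1" and w: "cmod w < 1"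
  shows "orth_BH2 B (\<lambda>u. (1 - B u * cnj (B w)) / (1 - u * cnj w))"
  unfolding orth_BH2_def
proof
  fix k :: nat
  define G where "G u = (B u - B w) * u ^ k" for u
  have "continuous_on (cball 0 1) G" unfolding G_def by (intro continuous_intros cont)
  moreover have "G holomorphic_on ball 0 1" unfolding G_def by (intro holomorphic_intros hol)
  ultimately have "((\<lambda>u. G u / (u - w)) has_contour_integral (2 * of_real pi * \<i> * G w)) (circlepath 0 1)"
    by (rule Cauchy_integral_circlepath) (use w in simp)
  hence "((\<lambda>u. G u / (u - w)) has_contour_integral 0) (part_circlepath 0 1 0 (2*pi))"
    by (simp add: G_def circlepath_def)
  hence "((\<lambda>t. G (cis t) / (cis t - w) * \<i> * cis t) has_integral 0) {0..2*pi}"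
    by (subst (asm) has_contour_integral_part_circlepath_iff) auto
  hence "((\<lambda>t. \<i> * (cnj \<circ> (\<lambda>t. G (cis t) / (cis t - w) * \<i> * cis t)) t) has_integral \<i> * cnj 0)
      {0..2*pi}"
    by (intro has_integral_mult_right) (subst has_integral_cnj)
  hence "((\<lambda>t. \<i> * cnj (G (cis t) / (cis t - w) * \<i> * cis t)) has_integral 0) {0..2*pi}"
    by (simp only: o_def complex_cnj_zero mult_zero_right)
  moreover have "\<i> * cnj (G (cis t) / (cis t - w) * \<i> * cis t)
      = (1 - B (cis t) * cnj (B w)) / (1 - cis t * cnj w) * cnj (B (cis t) * cis t ^ k)" for t
  proof -
    have "cis t * cnj (cis t) = 1" "B (cis t) * cnj (B (cis t)) = 1"
      using complex_norm_square[of "cis t"] complex_norm_square[of "B (cis t)"] unimodular[of "cis t"]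
      by simp_all
    moreover have "cis t \<noteq> w" using w by auto
    ultimately show ?thesis unfolding G_def by (intro model_kernel_boundary_identity[symmetric])
  qed
  ultimately show "integral {0..2*pi}
      (\<lambda>t. (1 - B (cis t) * cnj (B w)) / (1 - cis t * cnj w) * cnj (B (cis t) * cis t ^ k)) = 0"
    by (simp add: integral_unique)
qed

lemma integrable_boundary_pairing:
  fixes f B :: "complex \<Rightarrow> complex"
  assumes "continuous_on (cball 0 1) f" "continuous_on (cball 0 1) B"
  shows "(\<lambda>t. f (cis t) * cnj (B (cis t) * cis t ^ k)) integrable_on {0..2*pi}"
proof (rule integrable_continuous_interval)
  have "continuous_on {0..2*pi} cis" by (intro continuous_intros)
  moreover have "cis ` {0..2*pi} \<subseteq> cball 0 1" by auto
  ultimately have "continuous_on {0..2*pi} (f \<circ> cis)" "continuous_on {0..2*pi} (B \<circ> cis)"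
    using continuous_on_compose continuous_on_subset assms by metis+
  thus "continuous_on {0..2*pi} (\<lambda>t. f (cis t) * cnj (B (cis t) * cis t ^ k))"
    by (auto simp: o_def intro!: continuous_intros)
qed

text \<open>The Gram-matrix argument of \<open>dvd_if_dvd_conj_combinations\<close>, with the pairings of
  \<open>b\<^sub>j\<close> against \<open>B z\<^sup>k\<close> in place of residues; continuity carries the vanishing of
  \<open>\<Sum>\<^sub>j cnj (c\<^sub>j) b\<^sub>j\<close> from the open disk to the circle.\<close>
lemma orth_BH2_if_kernel_sum_orth_BH2:
  fixes B :: "complex \<Rightarrow> complex" and b :: "'i \<Rightarrow> complex \<Rightarrow> complex"
  assumes J: "finite J" and cont_B: "continuous_on (cball 0 1) B"
    and cont_b: "\<And>j. j \<in> J \<Longrightarrow> continuous_on (cball 0 1) (b j)"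
    and kernel: "\<And>w. cmod w < 1 \<Longrightarrow> orth_BH2 B (\<lambda>u. \<Sum>j\<in>J. b j u * cnj (b j w))"
    and j: "j \<in> J"
  shows "orth_BH2 B (b j)"
  unfolding orth_BH2_def
proof
  fix k :: nat
  define L where "L f = integral {0..2*pi} (\<lambda>t. f (cis t) * cnj (B (cis t) * cis t ^ k))"
    for f :: "complex \<Rightarrow> complex"
  have linear: "L (\<lambda>u. \<Sum>j\<in>J. a j * b j u) = (\<Sum>j\<in>J. a j * L (b j))" for a
  proof -
    have "L (\<lambda>u. \<Sum>j\<in>J. a j * b j u)
        = integral {0..2*pi} (\<lambda>t. \<Sum>j\<in>J. a j * (b j (cis t) * cnj (B (cis t) * cis t ^ k)))"
      unfolding L_def by (simp add: sum_distrib_right mult.assoc)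
    also have "\<dots> = (\<Sum>j\<in>J. a j * L (b j))"
      unfolding L_def using integrable_boundary_pairing[OF cont_b cont_B]
      by (subst integral_sum[OF J]) (auto intro: integrable_on_mult_right)
    finally show ?thesis .
  qed
  define c where "c j = L (b j)" for j
  have combination_0_in_disk: "(\<Sum>j\<in>J. cnj (c j) * b j w) = 0" if "w \<in> ball 0 1" for w
  proof -
    have "(\<Sum>j\<in>J. cnj (b j w) * c j) = L (\<lambda>u. \<Sum>j\<in>J. b j u * cnj (b j w))"
      unfolding c_def linear[symmetric] by (simp add: mult.commute)
    also have "\<dots> = 0" using kernel[of w] that by (simp add: orth_BH2_def L_def)
    finally have "cnj (\<Sum>j\<in>J. cnj (b j w) * c j) = 0" by simp
    thus ?thesis by (simp add: mult.commute)
  qed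
  have "continuous_on (closure (ball 0 1)) (\<lambda>u. \<Sum>j\<in>J. cnj (c j) * b j u)"
    by (auto intro!: continuous_intros cont_b)
  hence combination_0: "(\<Sum>j\<in>J. cnj (c j) * b j u) = 0" if "u \<in> cball 0 1" for u
    using continuous_constant_on_closure[of "ball 0 1" "\<lambda>u. \<Sum>j\<in>J. cnj (c j) * b j u" 0 u]
      combination_0_in_disk that by simp
  have "(\<Sum>j\<in>J. cnj (c j) * c j) = L (\<lambda>u. \<Sum>j\<in>J. cnj (c j) * b j u)"
    unfolding c_def linear ..
  also have "\<dots> = 0" unfolding L_def by (simp add: combination_0)
  finally have "c j = 0" by (rule sum_cnj_mult_self_eq_0D[OF J _ j])
  thus "integral {0..2*pi} (\<lambda>t. b j (cis t) * cnj (B (cis t) * cis t ^ k)) = 0"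
    by (simp add: c_def L_def)
qed

text \<open>Pairing the coefficient relations of the Agler decomposition with the vector
  \<open>(t1 - a p2, a p1 - t2)\<close> annihilates the \<open>p\<close> and \<open>ptilde\<close> terms exactly when \<open>\<bar>a\<bar> = 1\<close>.\<close>
lemma pairing_identity:
  fixes p1 p2 t1 t2 p1' p2' t1' t2' k rr sr rs ss qq a a' :: complex
  assumes rr: "k * rr = p1 * p1' - t2 * t2' - qq"
    and sr: "k * sr = p2 * p1' - t1 * t2'"
    and rs: "k * rs = p1 * p2' - t2 * t1'"
    and ss: "k * ss = p2 * p2' - t1 * t1' + qq"
    and "a * a' = 1"
  shows "k * ((t1 - a * p2) * (t1' - a' * p2') * rr + (a * p1 - t2) * (t1' - a' * p2') * sr
             + (t1 - a * p2) * (a' * p1' - t2') * rs + (a * p1 - t2) * (a' * p1' - t2') * ss)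
         = qq * ((a * p1 - t2) * (a' * p1' - t2') - (t1 - a * p2) * (t1' - a' * p2'))"
proof -
  have "k * ((t1 - a * p2) * (t1' - a' * p2') * rr + (a * p1 - t2) * (t1' - a' * p2') * sr
             + (t1 - a * p2) * (a' * p1' - t2') * rs + (a * p1 - t2) * (a' * p1' - t2') * ss)
      = (t1 - a * p2) * (t1' - a' * p2') * (k * rr) + (a * p1 - t2) * (t1' - a' * p2') * (k * sr)
             + (t1 - a * p2) * (a' * p1' - t2') * (k * rs) + (a * p1 - t2) * (a' * p1' - t2') * (k * ss)"
    by (simp add: algebra_simps)
  also have "\<dots> = qq * ((a * p1 - t2) * (a' * p1' - t2') - (t1 - a * p2) * (t1' - a' * p2'))
      + (t1 * p1 - t2 * p2) * (t1' * p1' - t2' * p2') * (1 - a * a')"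
    unfolding rr sr rs ss by (simp add: algebra_simps)
  finally show ?thesis using assms(5) by simp
qed

locale agler_decomposition =
  fixes n :: nat and p :: "complex poly poly" and Q :: "complex poly"
    and R :: "nat \<Rightarrow> complex poly poly"
  assumes deg_p: "degree p \<le> 1" "\<forall>i. degree (coeff p i) \<le> n"
    and deg_pt: "degree (ptilde n p) = 1"
    and copr: "coprime p (ptilde n p)"
    and deg_R: "\<forall>j\<in>{1..n}. degree (R j) \<le> 1 \<and> (\<forall>i. degree (coeff (R j) i) \<le> n - 1)"
    and agler: "\<forall>z1 z2 w1 w2.
        eval2 p z1 z2 * cnj (eval2 p w1 w2) - eval2 (ptilde n p) z1 z2 * cnj (eval2 (ptilde n p) w1 w2)
        = (1 - z1 * cnj w1) * (\<Sum>j=1..n. eval2 (R j) z1 z2 * cnj (eval2 (R j) w1 w2))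
          + (1 - z2 * cnj w2) * (poly Q z1 * cnj (poly Q w1))"
begin

definition "p1 = coeff p 0"
definition "p2 = coeff p 1"
definition "pt1 = refl1 n p1"
definition "pt2 = refl1 n p2"
definition "r j = coeff (R j) 0"
definition "s j = coeff (R j) 1"

lemma p_eq: "p = [:p1, p2:]"
  using deg_p(1) by (intro poly_eqI) (auto simp: p1_def p2_def coeff_pCons coeff_eq_0 split: nat.split)

lemma ptilde_eq: "ptilde n p = [:pt2, pt1:]"
  by (simp add: ptilde_def pt1_def pt2_def p1_def p2_def)

lemma eval2_R: "j \<in> {1..n} \<Longrightarrow> eval2 (R j) z1 z2 = poly (r j) z1 + z2 * poly (s j) z1"
  using eval2_degree_le_1[of "R j"] deg_R by (simp add: r_def s_def)

lemma agler_coeffs: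
  "(poly p1 z + a * poly p2 z) * cnj (poly p1 w + c * poly p2 w)
   - (poly pt2 z + a * poly pt1 z) * cnj (poly pt2 w + c * poly pt1 w)
   = (1 - z * cnj w) * (\<Sum>j=1..n. (poly (r j) z + a * poly (s j) z) * cnj (poly (r j) w + c * poly (s j) w))
     + (1 - a * cnj c) * (poly Q z * cnj (poly Q w))"
proof -
  have "eval2 p z a = poly p1 z + a * poly p2 z" for z a
    using eval2_degree_le_1[OF deg_p(1)] by (simp add: p1_def p2_def)
  moreover have "eval2 (ptilde n p) z a = poly pt2 z + a * poly pt1 z" for z a
    using eval2_degree_le_1[of "ptilde n p"] deg_pt by (simp add: ptilde_eq)
  moreover have "(\<Sum>j=1..n. eval2 (R j) z a * cnj (eval2 (R j) w c))
      = (\<Sum>j=1..n. (poly (r j) z + a * poly (s j) z) * cnj (poly (r j) w + c * poly (s j) w))"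
    by (rule sum.cong) (simp_all add: eval2_R)
  ultimately show ?thesis using agler[rule_format, of z a w c] by simp
qed

lemma pt1_nonzero: "pt1 \<noteq> 0"
  using deg_pt by (auto simp: ptilde_eq)

lemma p1_nonzero: "p1 \<noteq> 0"
  using pt1_nonzero by (auto simp: pt1_def)

lemma poly_pt1_unimodular: "cmod z = 1 \<Longrightarrow> poly pt1 z = z ^ n * cnj (poly p1 z)"
  and poly_pt2_unimodular: "cmod z = 1 \<Longrightarrow> poly pt2 z = z ^ n * cnj (poly p2 z)"
  using deg_p(2) by (simp_all add: pt1_def pt2_def p1_def p2_def poly_refl1_unimodular)

lemma boundary_identity:
  assumes "cmod z = 1"
  shows "poly Q z * cnj (poly Q z) = poly p1 z * cnj (poly p1 z) - poly p2 z * cnj (poly p2 z)"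
proof -
  have zc: "z * cnj z = 1" using assms complex_norm_square[of z] by simp
  have "poly pt2 z * cnj (poly pt2 z) = (z * cnj z) ^ n * (poly p2 z * cnj (poly p2 z))"
    by (simp add: poly_pt2_unimodular[OF assms] power_mult_distrib algebra_simps)
  thus ?thesis using agler_coeffs[of z 0 z 0] zc by simp
qed

lemma boundary_norm_identity:
  assumes "cmod z = 1"
  shows "(cmod (poly Q z))\<^sup>2 = (cmod (poly p1 z))\<^sup>2 - (cmod (poly p2 z))\<^sup>2"
proof -
  have "complex_of_real ((cmod (poly Q z))\<^sup>2) = of_real ((cmod (poly p1 z))\<^sup>2 - (cmod (poly p2 z))\<^sup>2)"
    using boundary_identity[OF assms] by (simp only: of_real_diff complex_norm_square)
  thus ?thesis by (simp only: of_real_eq_iff)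
qed

text \<open>If \<open>Q = 0\<close>, part (i) gives \<open>p1 pt1 = p2 pt2\<close>, i.e. \<open>[:p1:] * ptilde n p = [:pt2:] * p\<close>,
  and coprimality forces \<open>p\<close> to be constant in \<open>z2\<close>.\<close>
lemma Q_nonzero: "Q \<noteq> 0"
proof
  assume Q0: "Q = 0"
  have "p1 * pt1 = p2 * pt2"
  proof (rule poly_eqI_on_infinite[OF infinite_unit_sphere])
    fix z :: complex assume "z \<in> sphere 0 1"
    hence z: "cmod z = 1" by simp
    have "poly p1 z * cnj (poly p1 z) = poly p2 z * cnj (poly p2 z)"
      using boundary_identity[OF z] Q0 by simp
    thus "poly (p1 * pt1) z = poly (p2 * pt2) z"
      by (simp add: poly_pt1_unimodular[OF z] poly_pt2_unimodular[OF z] algebra_simps)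
  qed
  hence "[:p1:] * [:pt2, pt1:] = [:pt2:] * [:p1, p2:]"
    by (simp add: algebra_simps)
  hence "[:p1:] * ptilde n p = [:pt2:] * p"
    by (simp only: ptilde_eq p_eq[symmetric])
  hence "p dvd [:p1:] * ptilde n p" by (metis dvd_triv_right)
  hence "p dvd [:p1:]" using copr coprime_dvd_mult_left_iff by blast
  hence "degree p = 0" using dvd_imp_degree_le[of p "[:p1:]"] p1_nonzero by simp
  moreover have "p2 \<noteq> 0"
    using \<open>p1 * pt1 = p2 * pt2\<close> p1_nonzero pt1_nonzero by auto
  ultimately show False by (subst (asm) p_eq) simp
qed

end

locale agler_decomposition_at = agler_decomposition +
  fixes \<alpha> :: complex
  assumes alpha: "cmod \<alpha> = 1"
begin

definition "num = pt1 - smult \<alpha> p2"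
definition "den = smult \<alpha> p1 - pt2"
definition "numc = num div gcd num den"
definition "denc = den div gcd num den"
definition "B z = poly numc z / poly denc z"
definition "h j = numc * r j + denc * s j"
definition "q j = h j div Q"
definition "b j z = poly (q j) z / poly denc z"

lemma alpha_mult_cnj: "\<alpha> * cnj \<alpha> = 1"
  using alpha complex_norm_square[of \<alpha>] by simp

lemma Balpha_eq: "Balpha n p \<alpha> = B"
  by (rule ext) (simp add: Balpha_def B_def numc_def denc_def num_def den_def pt1_def pt2_def
      p1_def p2_def Let_def)

lemma num_or_den_nonzero: "num \<noteq> 0 \<or> den \<noteq> 0"
proof (rule ccontr)
  assume "\<not> (num \<noteq> 0 \<or> den \<noteq> 0)"
  hence pt: "pt1 = smult \<alpha> p2" "pt2 = smult \<alpha> p1" by (auto simp: num_def den_def)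
  have "[:pt2, pt1:] = [:[:\<alpha>:]:] * [:p1, p2:]" by (simp add: pt)
  hence "ptilde n p = [:[:\<alpha>:]:] * p" by (simp only: ptilde_eq p_eq[symmetric])
  hence "is_unit p" using copr coprime_common_divisor[of p "ptilde n p" p] by (metis dvd_refl dvd_triv_right)
  hence "p2 = 0" by (auto simp: is_unit_poly_iff p2_def)
  thus False using pt p1_nonzero alpha by (auto simp: pt2_def)
qed

lemma gcd_num_den_nonzero: "gcd num den \<noteq> 0"
  using num_or_den_nonzero by simp

lemma num_eq: "num = gcd num den * numc" and den_eq: "den = gcd num den * denc"
  by (simp_all add: numc_def denc_def)

lemma coprime_numc_denc: "coprime numc denc"
  unfolding numc_def denc_def by (rule div_gcd_coprime[OF num_or_den_nonzero])

lemma pairing_kernel: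
  "(1 - z * cnj w) * (\<Sum>j=1..n. poly (num * r j + den * s j) z * cnj (poly (num * r j + den * s j) w))
   = poly Q z * cnj (poly Q w) * (poly den z * cnj (poly den w) - poly num z * cnj (poly num w))"
proof -
  define k where "k = 1 - z * cnj w"
  define Srr where "Srr = (\<Sum>j=1..n. poly (r j) z * cnj (poly (r j) w))"
  define Ssr where "Ssr = (\<Sum>j=1..n. poly (s j) z * cnj (poly (r j) w))"
  define Srs where "Srs = (\<Sum>j=1..n. poly (r j) z * cnj (poly (s j) w))"
  define Sss where "Sss = (\<Sum>j=1..n. poly (s j) z * cnj (poly (s j) w))"
  have E: "(poly p1 z + a * poly p2 z) * cnj (poly p1 w + c * poly p2 w)
      - (poly pt2 z + a * poly pt1 z) * cnj (poly pt2 w + c * poly pt1 w)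
      = k * (Srr + a * Ssr + cnj c * Srs + a * cnj c * Sss) + (1 - a * cnj c) * (poly Q z * cnj (poly Q w))"
    for a c
    using agler_coeffs[of z a w c]
    by (simp add: k_def Srr_def Ssr_def Srs_def Sss_def sum.distrib sum_distrib_left algebra_simps)
  have rr: "k * Srr = poly p1 z * cnj (poly p1 w) - poly pt2 z * cnj (poly pt2 w) - poly Q z * cnj (poly Q w)"
    using E[of 0 0] by simp
  have sr: "k * Ssr = poly p2 z * cnj (poly p1 w) - poly pt1 z * cnj (poly pt2 w)"
    using E[of 1 0] E[of 0 0] by (simp add: algebra_simps)
  have rs: "k * Srs = poly p1 z * cnj (poly p2 w) - poly pt2 z * cnj (poly pt1 w)"
    using E[of 0 1] E[of 0 0] by (simp add: algebra_simps)
  have ss: "k * Sss = poly p2 z * cnj (poly p2 w) - poly pt1 z * cnj (poly pt1 w) + poly Q z * cnj (poly Q w)"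
    using E[of 1 1] E[of 1 0] E[of 0 1] E[of 0 0] by (simp add: algebra_simps)
  have "(\<Sum>j=1..n. poly (num * r j + den * s j) z * cnj (poly (num * r j + den * s j) w))
    = poly num z * cnj (poly num w) * Srr + poly den z * cnj (poly num w) * Ssr
      + poly num z * cnj (poly den w) * Srs + poly den z * cnj (poly den w) * Sss"
    by (simp add: Srr_def Ssr_def Srs_def Sss_def sum.distrib sum_distrib_left algebra_simps)
  thus ?thesis
    using pairing_identity[OF rr sr rs ss alpha_mult_cnj] by (simp add: k_def num_def den_def)
qed

lemma reduced_pairing_kernel:
  "(1 - z * cnj w) * (\<Sum>j=1..n. poly (h j) z * cnj (poly (h j) w))
   = poly Q z * cnj (poly Q w) * (poly denc z * cnj (poly denc w) - poly numc z * cnj (poly numc w))"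
proof (rule kernel_identity_cancel[OF gcd_num_den_nonzero])
  fix z w
  let ?g = "gcd num den"
  have "num * r j + den * s j = ?g * numc * r j + ?g * denc * s j" for j
    by (simp only: num_eq[symmetric] den_eq[symmetric])
  also have "\<dots> j = ?g * h j" for j by (simp add: h_def algebra_simps)
  finally have "num * r j + den * s j = ?g * h j" for j .
  hence "(\<Sum>j=1..n. poly (num * r j + den * s j) z * cnj (poly (num * r j + den * s j) w))
     = poly ?g z * cnj (poly ?g w) * (\<Sum>j=1..n. poly (h j) z * cnj (poly (h j) w))"
    by (simp add: sum_distrib_left algebra_simps)
  moreover have "poly num x = poly ?g x * poly numc x" "poly den x = poly ?g x * poly denc x" for x
    by (metis num_eq poly_mult, metis den_eq poly_mult)
  ultimately show "poly ?g z * cnj (poly ?g w) * ((1 - z * cnj w) * (\<Sum>j=1..n. poly (h j) z * cnj (poly (h j) w)))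
     = poly ?g z * cnj (poly ?g w) * (poly Q z * cnj (poly Q w)
         * (poly denc z * cnj (poly denc w) - poly numc z * cnj (poly numc w)))"
    using pairing_kernel[of z w] by (simp add: algebra_simps)
qed

lemma Q_dvd_conj_combination:
  assumes "poly Q (1 / cnj w) \<noteq> 0"
  shows "Q dvd (\<Sum>j=1..n. smult (cnj (poly (h j) w)) (h j))"
proof -
  let ?H = "\<Sum>j=1..n. smult (cnj (poly (h j) w)) (h j)"
  have "[:1, - cnj w:] * ?H
      = Q * smult (cnj (poly Q w)) (smult (cnj (poly denc w)) denc - smult (cnj (poly numc w)) numc)"
    by (rule poly_ext) (use reduced_pairing_kernel[of _ w] in \<open>simp add: poly_sum sum_distrib_left algebra_simps\<close>)
  hence "Q dvd [:1, - cnj w:] * ?H" by (metis dvd_triv_left)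
  moreover have "coprime Q [:1, - cnj w:]"
  proof (cases "w = 0")
    case False
    have "\<not> [:1, - cnj w:] dvd Q"
    proof
      assume "[:1, - cnj w:] dvd Q"
      hence "poly Q (1 / cnj w) = 0" using False by (auto elim!: dvdE)
      thus False using assms by simp
    qed
    moreover have "prime_elem [:1, - cnj w:]" by (rule prime_elem_linear_field_poly) (use False in auto)
    ultimately show ?thesis using prime_elem_imp_coprime coprime_commute by blast
  qed (simp add: one_pCons[symmetric])
  ultimately show ?thesis using coprime_dvd_mult_right_iff by blast
qed

lemma Q_dvd_h: "j \<in> {1..n} \<Longrightarrow> Q dvd h j"
proof (rule dvd_if_dvd_conj_combinations[OF finite_atLeastAtMost, of "{w. poly Q (1 / cnj w) \<noteq> 0}"])
  have "- {w. poly Q (1 / cnj w) \<noteq> 0} \<subseteq> (\<lambda>x. 1 / cnj x) ` {x. poly Q x = 0}"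
    by (auto intro!: image_eqI[where x = "1 / cnj _"])
  hence "finite (- {w. poly Q (1 / cnj w) \<noteq> 0})"
    by (rule finite_subset) (simp add: poly_roots_finite Q_nonzero)
  thus "infinite {w. poly Q (1 / cnj w) \<noteq> 0}"
    using infinite_UNIV_char_0[where 'a = complex] by (metis Compl_partition finite_UnI)
qed (use Q_dvd_conj_combination in auto)

lemma h_eq: "j \<in> {1..n} \<Longrightarrow> h j = Q * q j"
  unfolding q_def using Q_dvd_h by simp

lemma q_kernel:
  "(1 - z * cnj w) * (\<Sum>j=1..n. poly (q j) z * cnj (poly (q j) w))
   = poly denc z * cnj (poly denc w) - poly numc z * cnj (poly numc w)"
proof -
  have "(1 - z * cnj w) * (\<Sum>j=1..n. poly (q j) z * cnj (poly (q j) w))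
   = poly 1 z * cnj (poly 1 w) * (poly denc z * cnj (poly denc w) - poly numc z * cnj (poly numc w))"
  proof (rule kernel_identity_cancel[OF Q_nonzero])
    fix z w
    have "(\<Sum>j=1..n. poly (h j) z * cnj (poly (h j) w))
       = poly Q z * cnj (poly Q w) * (\<Sum>j=1..n. poly (q j) z * cnj (poly (q j) w))"
      unfolding sum_distrib_left by (rule sum.cong) (simp_all add: h_eq)
    thus "poly Q z * cnj (poly Q w) * ((1 - z * cnj w) * (\<Sum>j=1..n. poly (q j) z * cnj (poly (q j) w)))
      = poly Q z * cnj (poly Q w) * (poly 1 z * cnj (poly 1 w)
          * (poly denc z * cnj (poly denc w) - poly numc z * cnj (poly numc w)))"
      using reduced_pairing_kernel[of z w] by (simp add: algebra_simps)
  qed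
  thus ?thesis by simp
qed

text \<open>On the diagonal, \<open>q_kernel\<close> reads
  \<open>(1 - \<bar>z\<bar>\<^sup>2) \<Sum> \<bar>q\<^sub>j z\<bar>\<^sup>2 = \<bar>denc z\<bar>\<^sup>2 - \<bar>numc z\<bar>\<^sup>2\<close>, so a zero of \<open>denc\<close> in the
  closed disk would be a common zero of the coprime \<open>numc\<close> and \<open>denc\<close>.\<close>
lemma denc_nonzero:
  assumes "cmod z \<le> 1"
  shows "poly denc z \<noteq> 0"
proof
  assume denc_0: "poly denc z = 0"
  have "complex_of_real ((1 - (cmod z)\<^sup>2) * (\<Sum>j=1..n. (cmod (poly (q j) z))\<^sup>2))
     = complex_of_real ((cmod (poly denc z))\<^sup>2 - (cmod (poly numc z))\<^sup>2)"
    using q_kernel[of z z] by (simp only: of_real_mult of_real_diff of_real_sum complex_norm_square of_real_1)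
  hence "(1 - (cmod z)\<^sup>2) * (\<Sum>j=1..n. (cmod (poly (q j) z))\<^sup>2) = - (cmod (poly numc z))\<^sup>2"
    using denc_0 by (simp only: of_real_eq_iff) simp
  moreover have "0 \<le> (1 - (cmod z)\<^sup>2) * (\<Sum>j=1..n. (cmod (poly (q j) z))\<^sup>2)"
    using assms by (intro mult_nonneg_nonneg sum_nonneg) (auto simp: power_le_one abs_square_le_1)
  ultimately have "poly numc z = 0" by simp
  thus False using coprime_imp_no_common_root[OF coprime_numc_denc _ denc_0] by blast
qed

lemma B_unimodular:
  assumes "cmod z = 1"
  shows "cmod (B z) = 1"
proof -
  have "z * cnj z = 1" using assms complex_norm_square[of z] by simp
  hence "poly numc z * cnj (poly numc z) = poly denc z * cnj (poly denc z)"
    using q_kernel[of z z] by simp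
  hence "(cmod (poly numc z))\<^sup>2 = (cmod (poly denc z))\<^sup>2"
    by (metis complex_norm_square of_real_eq_iff)
  thus ?thesis using denc_nonzero[of z] assms by (simp add: B_def norm_divide power2_eq_iff_nonneg)
qed

lemma b_kernel:
  assumes "cmod z \<le> 1" "cmod w < 1"
  shows "(\<Sum>j=1..n. b j z * cnj (b j w)) = (1 - B z * cnj (B w)) / (1 - z * cnj w)"
proof -
  have "cmod (z * cnj w) < 1"
    using assms mult_left_le_one_le[of "cmod w" "cmod z"] by (simp add: norm_mult)
  hence "1 - z * cnj w \<noteq> 0" by auto
  moreover have "poly denc z \<noteq> 0" "poly denc w \<noteq> 0" using assms denc_nonzero by simp_all
  ultimately show ?thesis
    using q_kernel[of z w] by (simp add: b_def B_def sum_divide_distrib[symmetric] field_simps)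
qed

lemma continuous_on_B: "continuous_on (cball 0 1) B"
  unfolding B_def by (intro continuous_intros) (auto dest: denc_nonzero)

lemma holomorphic_on_B: "B holomorphic_on ball 0 1"
  unfolding B_def by (intro holomorphic_intros) (use denc_nonzero less_imp_le in fastforce)

lemma continuous_on_b: "continuous_on (cball 0 1) (b j)"
  unfolding b_def by (intro continuous_intros) (auto dest: denc_nonzero)

lemma holomorphic_on_b: "b j holomorphic_on ball 0 1"
  unfolding b_def by (intro holomorphic_intros) (use denc_nonzero less_imp_le in fastforce)

lemma orth_BH2_b: "j \<in> {1..n} \<Longrightarrow> orth_BH2 B (b j)"
proof (rule orth_BH2_if_kernel_sum_orth_BH2[OF finite_atLeastAtMost continuous_on_B continuous_on_b])
  fix w :: complex assume w: "cmod w < 1"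
  have "orth_BH2 B (\<lambda>u. (1 - B u * cnj (B w)) / (1 - u * cnj w))"
    using continuous_on_B holomorphic_on_B B_unimodular w by (rule orth_BH2_model_kernel)
  moreover have "(\<Sum>j=1..n. b j (cis t) * cnj (b j w)) = (1 - B (cis t) * cnj (B w)) / (1 - cis t * cnj w)"
    for t by (rule b_kernel) (simp_all add: w)
  ultimately show "orth_BH2 B (\<lambda>u. \<Sum>j=1..n. b j u * cnj (b j w))"
    by (simp only: orth_BH2_def simp_thms)
qed

lemma rational_disk_algebra_b: "rational_disk_algebra (b j)"
proof -
  have "denc \<noteq> 0" using denc_nonzero[of 0] by auto
  hence "\<exists>u v. v \<noteq> 0 \<and> (\<forall>z\<in>cball 0 1. poly v z \<noteq> 0 \<longrightarrow> b j z = poly u z / poly v z)"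
    by (intro exI[of _ "q j"] exI[of _ denc]) (simp add: b_def)
  thus ?thesis unfolding rational_disk_algebra_def using continuous_on_b holomorphic_on_b by blast
qed

lemma R_decomposition:
  assumes "j \<in> {1..n}" "cmod z1 \<le> 1"
  shows "eval2 (R j) z1 z2 = poly (r j) z1 * (1 - B z1 * z2) + z2 * poly Q z1 * b j z1"
proof -
  have "poly Q z1 * poly (q j) z1 = poly numc z1 * poly (r j) z1 + poly denc z1 * poly (s j) z1"
    using arg_cong[OF h_eq[OF assms(1)], of "\<lambda>f. poly f z1"] by (simp add: h_def)
  thus ?thesis
    using denc_nonzero[OF assms(2)] by (simp add: eval2_R[OF assms(1)] B_def b_def field_simps)
qed

lemma unique_decomposition:
  assumes j: "j \<in> {1..n}"
  shows "\<exists>!r :: complex poly. degree r \<le> n - 1 \<and>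
    (\<exists>b. rational_disk_algebra b \<and> orth_BH2 (Balpha n p \<alpha>) b \<and>
       (\<forall>z1 z2. cmod z1 \<le> 1 \<longrightarrow> cmod z2 \<le> 1 \<longrightarrow>
          eval2 (R j) z1 z2 = poly r z1 * (1 - Balpha n p \<alpha> z1 * z2) + z2 * poly Q z1 * b z1))"
proof (rule ex1I[of _ "r j"])
  show "degree (r j) \<le> n - 1 \<and>
    (\<exists>b. rational_disk_algebra b \<and> orth_BH2 (Balpha n p \<alpha>) b \<and>
       (\<forall>z1 z2. cmod z1 \<le> 1 \<longrightarrow> cmod z2 \<le> 1 \<longrightarrow>
          eval2 (R j) z1 z2 = poly (r j) z1 * (1 - Balpha n p \<alpha> z1 * z2) + z2 * poly Q z1 * b z1))"
    using deg_R j rational_disk_algebra_b orth_BH2_b[OF j] R_decomposition[OF j]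
    by (auto simp: Balpha_eq r_def)
next
  fix r' :: "complex poly"
  assume "degree r' \<le> n - 1 \<and>
    (\<exists>b. rational_disk_algebra b \<and> orth_BH2 (Balpha n p \<alpha>) b \<and>
       (\<forall>z1 z2. cmod z1 \<le> 1 \<longrightarrow> cmod z2 \<le> 1 \<longrightarrow>
          eval2 (R j) z1 z2 = poly r' z1 * (1 - Balpha n p \<alpha> z1 * z2) + z2 * poly Q z1 * b z1))"
  hence "eval2 (R j) z 0 = poly r' z" if "cmod z \<le> 1" for z
    using that by fastforce
  thus "r' = r j" unfolding r_def by (rule eq_coeff_0_if_eval2_eq_on_disk)
qed

end

theorem proposition3p6:
  fixes n :: nat and p :: "complex poly poly" and Q :: "complex poly"
    and R :: "nat \<Rightarrow> complex poly poly"
  assumes n: "n \<ge> 1"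
    and deg_p: "degree p \<le> 1" "\<forall>i. degree (coeff p i) \<le> n"
    and nozero: "\<forall>z1 z2. cmod z1 < 1 \<longrightarrow> cmod z2 < 1 \<longrightarrow> eval2 p z1 z2 \<noteq> 0"
    and deg_pt: "degree (ptilde n p) = 1" "degz1 (ptilde n p) = n"
    and copr: "coprime p (ptilde n p)"
    and deg_Q: "degree Q \<le> n"
    and deg_R: "\<forall>j\<in>{1..n}. degree (R j) \<le> 1 \<and> (\<forall>i. degree (coeff (R j) i) \<le> n - 1)"
    and agler: "\<forall>z1 z2 w1 w2.
        eval2 p z1 z2 * cnj (eval2 p w1 w2) - eval2 (ptilde n p) z1 z2 * cnj (eval2 (ptilde n p) w1 w2)
        = (1 - z1 * cnj w1) * (\<Sum>j=1..n. eval2 (R j) z1 z2 * cnj (eval2 (R j) w1 w2))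
          + (1 - z2 * cnj w2) * (poly Q z1 * cnj (poly Q w1))"
  shows "(\<forall>\<zeta>. cmod \<zeta> = 1 \<longrightarrow>
            (cmod (poly Q \<zeta>))\<^sup>2 = (cmod (poly (coeff p 0) \<zeta>))\<^sup>2 - (cmod (poly (coeff p 1) \<zeta>))\<^sup>2)
       \<and> (\<forall>\<alpha>. cmod \<alpha> = 1 \<longrightarrow> (\<forall>j\<in>{1..n}.
            \<exists>!r :: complex poly. degree r \<le> n - 1 \<and>
              (\<exists>b. rational_disk_algebra b \<and> orth_BH2 (Balpha n p \<alpha>) b \<and>
                 (\<forall>z1 z2. cmod z1 \<le> 1 \<longrightarrow> cmod z2 \<le> 1 \<longrightarrow>
                    eval2 (R j) z1 z2 = poly r z1 * (1 - Balpha n p \<alpha> z1 * z2)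
                                         + z2 * poly Q z1 * b z1))))"
proof -
  have decomposition: "agler_decomposition n p Q R"
    using deg_p deg_pt(1) copr deg_R agler by unfold_locales
  then interpret agler_decomposition n p Q R .
  have "agler_decomposition_at n p Q R \<alpha>" if "cmod \<alpha> = 1" for \<alpha>
    using decomposition that by (intro agler_decomposition_at.intro agler_decomposition_at_axioms.intro)
  thus ?thesis
    using boundary_norm_identity agler_decomposition_at.unique_decomposition
    unfolding p1_def p2_def by blast
qed

end
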